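(* Let $(X_{a,s})_{s\ge1}$ be i.i.d. random variables with values in $[0,1]$ and mean $\mu_a$, and let $\mu_1$ satisfy $\mu_a<\mu_1<1$. For $\epsilon>0$ and an integer $n\ge3$ let \[K_n=\left\lfloor\frac{1+\epsilon}{d(\mu_a,\mu_1)}\big(\log(n)+3\log(\log(n))\big)\right\rfloor.\] Then for each $\epsilon>0$ there exist $C_2(\epsilon)>0$ and $\beta(\epsilon)>0$ (depending also on $\mu_a,\mu_1$) such that for all $n\ge3$, \[\sum_{s=K_n+1}^\infty\mathbb{P}\left(d^+(\hat\mu_{a,s},\mu_1)<\frac{d(\mu_a,\mu_1)}{1+\epsilon}\right)\le\frac{C_2(\epsilon)}{n^{\beta(\epsilon)}}.\]
   Context: $\hat\mu_{a,s}=(X_{a,1}+\dots+X_{a,s})/s$. $d(p,q)=p\log\frac pq+(1-p)\log\frac{1-p}{1-q}$ for $p,q\in[0,1]$ (conventions $0\log0=0\log(0/0)=0$, $x\log(x/0)=+\infty$ for $x>0$), and $d^+(x,y)=d(x,y)\mathbb{1}\{x<y\}$. *)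

theory Defs
  imports "HOL-Probability.Probability"
begin

definition xlogxy :: "real \<Rightarrow> real \<Rightarrow> ereal" where
  "xlogxy x y = (if x = 0 then 0 else if y = 0 then \<infinity> else ereal (x * ln (x / y)))"

definition kl :: "real \<Rightarrow> real \<Rightarrow> ereal" where
  "kl p q = xlogxy p q + xlogxy (1 - p) (1 - q)"

definition klplus :: "real \<Rightarrow> real \<Rightarrow> ereal" where
  "klplus x y = (if x < y then kl x y else 0)"

definition emp_mean :: "(nat \<Rightarrow> 'a \<Rightarrow> real) \<Rightarrow> nat \<Rightarrow> 'a \<Rightarrow> real" where
  "emp_mean X s \<omega> = (\<Sum>t=1..s. X t \<omega>) / real s"

end

theory Submission
  imports Defs "HOL-Real_Asymp.Real_Asymp"
begin

(*
  Write d = d(mu_a, mu_1) > 0 and theta = d / (1 + eps) < d.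
  (1) On [0,1) the divergence x |-> d(x, mu_1) is a continuous real function, so
      d^+(x, mu_1) < theta can only hold for x at distance at least some r > 0 from
      mu_a: near mu_a we have x < mu_1 and d(x, mu_1) > theta.
  (2) By Hoeffding's inequality the event |hat mu_s - mu_a| >= r has probability at
      most 2 exp(-2 r^2 s), so each summand decays like exp(-c s) with c = 2 r^2.
  (3) Summing the geometric bound over s > K_n gives (2 / (1 - e^-c)) exp(-c (K_n + 1)),
      and K_n + 1 >= (1 + eps)/d * log n turns this into C_2 / n^beta with
      beta = c (1 + eps) / d.
  The file first studies the real-valued divergence kl_real (positivity, continuity),
  then proves (1), (2), the two analytic estimates behind (3), assembles them in
  tail_sum_bound, and finally translates that bound into the extended-real
  formulation of the theorem.
*)

definition kl_real :: "real \<Rightarrow> real \<Rightarrow> real" where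
  "kl_real m x = x * ln (x / m) + (1 - x) * ln ((1 - x) / (1 - m))"

lemma kl_eq_kl_real:
  assumes "0 \<le> x" "x \<le> 1" "0 < m" "m < 1"
  shows "kl x m = ereal (kl_real m x)"
  using assms by (auto simp: kl_def xlogxy_def kl_real_def)

lemma ln_less_minus_one: "0 < x \<Longrightarrow> x \<noteq> 1 \<Longrightarrow> ln x < x - 1" for x :: real
  using ln_le_minus_one ln_eq_minus_one by force

lemma kl_real_pos:
  assumes "0 \<le> p" "p < m" "m < 1"
  shows "kl_real m p > 0"
proof (cases "p = 0")
  case True
  have "1 / (1 - m) > 1" using assms by (simp add: field_simps)
  then show ?thesis using True by (simp add: kl_real_def ln_gt_zero)
next
  case False
  with assms have p: "p > 0" by auto
  have "p * ln (m / p) < p * (m / p - 1)"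
    using p assms by (intro mult_strict_left_mono ln_less_minus_one) auto
  also have "\<dots> = m - p" using p by (simp add: field_simps)
  finally have first: "p * ln (m / p) < m - p" .
  have "(1 - p) * ln ((1 - m) / (1 - p)) \<le> (1 - p) * ((1 - m) / (1 - p) - 1)"
    using assms by (intro mult_left_mono ln_le_minus_one) auto
  also have "\<dots> = p - m" using assms by (simp add: field_simps)
  finally have second: "(1 - p) * ln ((1 - m) / (1 - p)) \<le> p - m" .
  have "kl_real m p = - (p * ln (m / p)) - (1 - p) * ln ((1 - m) / (1 - p))"
    using p assms by (simp add: kl_real_def ln_div algebra_simps)
  then show ?thesis using first second by simp
qed

text \<open>Continuity on [0,1), including the endpoint 0 where x ln x \<rightarrow> 0.\<close>
lemma continuous_on_kl_real:
  assumes m: "0 < m" "m < 1"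
  shows "continuous_on {0..<1} (kl_real m)"
  unfolding continuous_on_def
proof
  fix p :: real assume p: "p \<in> {0..<1}"
  show "(kl_real m \<longlongrightarrow> kl_real m p) (at p within {0..<1})"
  proof (cases "p = 0")
    case True
    have entropy_term: "((\<lambda>x. x * ln (x / m)) \<longlongrightarrow> 0) (at_right 0)"
      using m by real_asymp
    have "((\<lambda>x. (1 - x) * ln ((1 - x) / (1 - m))) \<longlongrightarrow> (1 - 0) * ln ((1 - 0) / (1 - m)))
        (at_right 0)"
      using m by (intro tendsto_intros) auto
    from tendsto_add[OF entropy_term this] have "(kl_real m \<longlongrightarrow> kl_real m 0) (at_right 0)"
      unfolding kl_real_def by simp
    moreover have "at 0 within {0..<1} \<le> at (0::real) within {0..1}"
      by (rule at_le) auto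
    moreover have "at 0 within {0..1} = at_right (0::real)"
      by (rule at_within_Icc_at_right) simp
    ultimately show ?thesis using True by (auto intro: tendsto_mono)
  next
    case False
    with p have "isCont (kl_real m) p"
      unfolding kl_real_def using m by (intro continuous_intros) auto
    then show ?thesis
      by (metis continuous_at_imp_continuous_at_within continuous_within)
  qed
qed

lemma klplus_small_imp_far:
  assumes "0 \<le> \<mu>a" "\<mu>a < m" "m < 1" and \<theta>: "\<theta> < kl_real m \<mu>a"
  shows "\<exists>r>0. \<forall>x\<in>{0..1}. klplus x m < ereal \<theta> \<longrightarrow> r \<le> \<bar>x - \<mu>a\<bar>"
proof -
  have m: "0 < m" "m < 1" using assms by auto
  have "\<mu>a \<in> {0..<1}" "kl_real m \<mu>a - \<theta> > 0" using assms by auto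
  with continuous_on_kl_real[OF m] obtain \<delta> where \<delta>: "\<delta> > 0"
    and near: "\<And>x. x \<in> {0..<1} \<Longrightarrow> dist x \<mu>a < \<delta> \<Longrightarrow> dist (kl_real m x) (kl_real m \<mu>a) < kl_real m \<mu>a - \<theta>"
    unfolding continuous_on_iff by blast
  define r where "r = min \<delta> (m - \<mu>a)"
  have "r > 0" using \<delta> assms by (simp add: r_def)
  moreover have "r \<le> \<bar>x - \<mu>a\<bar>" if x: "x \<in> {0..1}" "klplus x m < ereal \<theta>" for x
  proof (rule ccontr)
    assume "\<not> r \<le> \<bar>x - \<mu>a\<bar>"
    then have close: "\<bar>x - \<mu>a\<bar> < \<delta>" "x < m" by (auto simp: r_def)
    then have "kl_real m x > \<theta>"
      using near[of x] x m by (auto simp: dist_real_def)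
    moreover have "klplus x m = ereal (kl_real m x)"
      using close x m by (simp add: klplus_def kl_eq_kl_real)
    ultimately show False using x by simp
  qed
  ultimately show ?thesis by blast
qed

lemma (in prob_space) emp_mean_deviation_bound:
  assumes meas: "\<And>s. s \<ge> 1 \<Longrightarrow> X s \<in> borel_measurable M"
    and indep: "indep_vars (\<lambda>_. borel) X {1..}"
    and ident: "\<And>s. s \<ge> 1 \<Longrightarrow> distr M borel (X s) = distr M borel (X 1)"
    and bounded: "\<And>s \<omega>. s \<ge> 1 \<Longrightarrow> \<omega> \<in> space M \<Longrightarrow> X s \<omega> \<in> {0..1}"
    and s: "s \<ge> 1" and r: "r > 0"
  shows "emeasure M {\<omega> \<in> space M. r \<le> \<bar>emp_mean X s \<omega> - expectation (X 1)\<bar>}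
           \<le> ennreal (2 * exp (- 2 * r\<^sup>2 * real s))"
proof -
  interpret H: Hoeffding_ineq_iid M "{1..s}" X "X 1" 0 1 "expectation (X 1)"
  proof unfold_locales
    show "indep_vars (\<lambda>_. borel) X {1..s}"
      by (rule indep_vars_subset[OF indep]) auto
    show "\<And>i. i \<in> {1..s} \<Longrightarrow> distr M borel (X i) = distr M borel (X 1)"
      by (rule ident) simp
    show "random_variable borel (X 1)" using meas[of 1] by simp
    show "AE x in M. X 1 x \<in> {0..1}" by (rule AE_I2) (use bounded in auto)
  qed simp_all
  have "prob {\<omega> \<in> space M. r \<le> \<bar>(\<Sum>i\<in>{1..s}. X i \<omega>) / real (card {1..s}) - expectation (X 1)\<bar>}
          \<le> 2 * exp (-2 * real (card {1..s}) * r\<^sup>2 / (1 - 0)\<^sup>2)"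
    by (rule H.Hoeffding_ineq_abs_ge') (use r s in auto)
  then have "prob {\<omega> \<in> space M. r \<le> \<bar>emp_mean X s \<omega> - expectation (X 1)\<bar>}
               \<le> 2 * exp (- 2 * r\<^sup>2 * real s)"
    by (simp add: emp_mean_def mult_ac)
  then show ?thesis by (simp add: emeasure_eq_measure ennreal_leI)
qed

lemma suminf_tail_exp_bound:
  fixes f :: "nat \<Rightarrow> ennreal"
  assumes c: "c > 0" and "a \<ge> 0" and f: "\<And>i. f i \<le> ennreal (a * exp (- c * real (i + k)))"
  shows "(\<Sum>i. f i) \<le> ennreal (a / (1 - exp (- c)) * exp (- c * real k))"
proof -
  have ratio: "exp (- c) < 1" using c by simp
  have split: "a * exp (- c * real (i + k)) = a * exp (- c * real k) * exp (- c) ^ i" for i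
    by (simp add: algebra_simps flip: exp_of_nat_mult exp_add)
  have "(\<lambda>i. a * exp (- c * real (i + k))) sums (a * exp (- c * real k) * (1 / (1 - exp (- c))))"
    unfolding split by (intro sums_mult geometric_sums) (use ratio in auto)
  then have "(\<Sum>i. ennreal (a * exp (- c * real (i + k))))
               = ennreal (a / (1 - exp (- c)) * exp (- c * real k))"
    using \<open>a \<ge> 0\<close> by (subst suminf_ennreal_eq) auto
  moreover have "(\<Sum>i. f i) \<le> (\<Sum>i. ennreal (a * exp (- c * real (i + k))))"
    using f by (intro suminf_le) auto
  ultimately show ?thesis by simp
qed

text \<open>Step (3b): the threshold K_n = floor(a (log n + 3 log log n)) satisfies
  exp(-c (K_n + 1)) \<le> n^(-c a), because log log n \<ge> 0 for n \<ge> 3.\<close>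
lemma exp_threshold_bound:
  fixes n :: nat
  assumes "n \<ge> 3" "a > 0" "c > 0"
  shows "exp (- c * real (nat \<lfloor>a * (ln (real n) + 3 * ln (ln (real n)))\<rfloor> + 1))
           \<le> 1 / real n powr (c * a)"
proof -
  have "exp 1 \<le> real n" using exp_le assms(1) by linarith
  then have ln_n: "ln (real n) \<ge> 1" using assms(1) by (simp add: ln_ge_iff)
  then have "a * ln (real n) \<le> a * (ln (real n) + 3 * ln (ln (real n)))"
    using assms(2) by (intro mult_left_mono) auto
  moreover have "a * ln (real n) \<ge> 0" using ln_n assms(2) by simp
  ultimately have "a * ln (real n) \<le> real (nat \<lfloor>a * (ln (real n) + 3 * ln (ln (real n)))\<rfloor> + 1)"
    by linarith
  then have "exp (- c * real (nat \<lfloor>a * (ln (real n) + 3 * ln (ln (real n)))\<rfloor> + 1))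
               \<le> exp (- (c * a * ln (real n)))"
    using assms(3) by (simp add: mult.assoc)
  also have "\<dots> = 1 / real n powr (c * a)"
    using assms(1) by (simp add: powr_def exp_minus field_simps)
  finally show ?thesis .
qed

lemma emp_mean_in_unit:
  assumes "s \<ge> 1" and "\<And>t. t \<ge> 1 \<Longrightarrow> X t \<omega> \<in> {0..1}"
  shows "emp_mean X s \<omega> \<in> {0..1}"
proof -
  have "0 \<le> (\<Sum>t=1..s. X t \<omega>)"
    using assms(2) by (intro sum_nonneg) auto
  moreover have "(\<Sum>t=1..s. X t \<omega>) \<le> (\<Sum>t=1..s. 1)"
    using assms(2) by (intro sum_mono) auto
  ultimately show ?thesis using assms(1) by (auto simp: emp_mean_def field_simps)
qed

lemma emp_mean_measurable:
  assumes "\<And>t. t \<ge> 1 \<Longrightarrow> X t \<in> borel_measurable M"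
  shows "emp_mean X s \<in> borel_measurable M"
  unfolding emp_mean_def using assms by measurable

lemma (in prob_space) unit_interval_mean_nonneg:
  fixes Y :: "'a \<Rightarrow> real"
  assumes "\<And>\<omega>. \<omega> \<in> space M \<Longrightarrow> Y \<omega> \<in> {0..1}"
  shows "0 \<le> expectation Y"
  by (intro integral_nonneg_AE AE_I2) (use assms in auto)

lemma (in prob_space) small_divergence_exponential_bound:
  assumes meas: "\<And>s. s \<ge> 1 \<Longrightarrow> X s \<in> borel_measurable M"
    and indep: "indep_vars (\<lambda>_. borel) X {1..}"
    and ident: "\<And>s. s \<ge> 1 \<Longrightarrow> distr M borel (X s) = distr M borel (X 1)"
    and bounded: "\<And>s \<omega>. s \<ge> 1 \<Longrightarrow> \<omega> \<in> space M \<Longrightarrow> X s \<omega> \<in> {0..1}"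
    and mean: "expectation (X 1) = \<mu>a"
    and "\<mu>a < m" "m < 1" and \<theta>: "\<theta> < kl_real m \<mu>a"
  shows "\<exists>c>0. \<forall>s\<ge>1. emeasure M {\<omega> \<in> space M. klplus (emp_mean X s \<omega>) m < ereal \<theta>}
                       \<le> ennreal (2 * exp (- c * real s))"
proof -
  have "0 \<le> \<mu>a"
    unfolding mean[symmetric] using bounded by (intro unit_interval_mean_nonneg) auto
  then obtain r where r: "r > 0"
    and far: "\<And>x. x \<in> {0..1} \<Longrightarrow> klplus x m < ereal \<theta> \<Longrightarrow> r \<le> \<bar>x - \<mu>a\<bar>"
    using klplus_small_imp_far[of \<mu>a m \<theta>] assms(6-8) by blast
  have "emeasure M {\<omega> \<in> space M. klplus (emp_mean X s \<omega>) m < ereal \<theta>}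
          \<le> ennreal (2 * exp (- (2 * r\<^sup>2) * real s))" if s: "s \<ge> 1" for s
  proof -
    have deviates: "r \<le> \<bar>emp_mean X s \<omega> - expectation (X 1)\<bar>"
      if \<omega>: "\<omega> \<in> space M" and small: "klplus (emp_mean X s \<omega>) m < ereal \<theta>" for \<omega>
    proof -
      have "emp_mean X s \<omega> \<in> {0..1}"
        by (rule emp_mean_in_unit[OF s]) (rule bounded[OF _ \<omega>])
      from far[OF this small] show ?thesis unfolding mean .
    qed
    then have "{\<omega> \<in> space M. klplus (emp_mean X s \<omega>) m < ereal \<theta>}
            \<subseteq> {\<omega> \<in> space M. r \<le> \<bar>emp_mean X s \<omega> - expectation (X 1)\<bar>}"
      by blast
    moreover have "{\<omega> \<in> space M. r \<le> \<bar>emp_mean X s \<omega> - expectation (X 1)\<bar>} \<in> sets M"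
      using emp_mean_measurable[OF meas] by measurable
    ultimately have "emeasure M {\<omega> \<in> space M. klplus (emp_mean X s \<omega>) m < ereal \<theta>}
            \<le> emeasure M {\<omega> \<in> space M. r \<le> \<bar>emp_mean X s \<omega> - expectation (X 1)\<bar>}"
      by (rule emeasure_mono)
    also have "\<dots> \<le> ennreal (2 * exp (- 2 * r\<^sup>2 * real s))"
      by (rule emp_mean_deviation_bound[OF meas indep ident bounded s r])
    finally show ?thesis by simp
  qed
  then show ?thesis using r by (intro exI[of _ "2 * r\<^sup>2"]) auto
qed

lemma (in prob_space) tail_sum_bound:
  assumes "\<And>s. s \<ge> 1 \<Longrightarrow> X s \<in> borel_measurable M"
    and "indep_vars (\<lambda>_. borel) X {1..}"
    and "\<And>s. s \<ge> 1 \<Longrightarrow> distr M borel (X s) = distr M borel (X 1)"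
    and "\<And>s \<omega>. s \<ge> 1 \<Longrightarrow> \<omega> \<in> space M \<Longrightarrow> X s \<omega> \<in> {0..1}"
    and "expectation (X 1) = \<mu>a"
    and "\<mu>a < m" "m < 1" and \<epsilon>: "\<epsilon> > 0"
  shows "\<exists>C2>0. \<exists>\<beta>>0. \<forall>n::nat. n \<ge> 3 \<longrightarrow>
    (\<Sum>i. emeasure M {\<omega> \<in> space M. klplus (emp_mean X
        (i + nat \<lfloor>(1 + \<epsilon>) / kl_real m \<mu>a * (ln (real n) + 3 * ln (ln (real n)))\<rfloor> + 1) \<omega>) m
          < ereal (kl_real m \<mu>a) / ereal (1 + \<epsilon>)})
      \<le> ennreal (C2 / real n powr \<beta>)"
proof -
  define d where "d = kl_real m \<mu>a"
  have "0 \<le> \<mu>a" using assms(4,5) unit_interval_mean_nonneg by fastforce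
  then have d: "d > 0" using kl_real_pos assms(6,7) by (simp add: d_def)
  have level: "ereal d / ereal (1 + \<epsilon>) = ereal (d / (1 + \<epsilon>))" using \<epsilon> by simp
  have "d / (1 + \<epsilon>) < d" using d \<epsilon> by (simp add: field_simps)
  then obtain c where c: "c > 0" and decay: "\<And>s. s \<ge> 1 \<Longrightarrow>
      emeasure M {\<omega> \<in> space M. klplus (emp_mean X s \<omega>) m < ereal (d / (1 + \<epsilon>))}
        \<le> ennreal (2 * exp (- c * real s))"
    using small_divergence_exponential_bound[OF assms(1-7)] unfolding d_def by blast
  define C2 where "C2 = 2 / (1 - exp (- c))"
  have "C2 > 0" using c by (simp add: C2_def)
  moreover have "c * ((1 + \<epsilon>) / d) > 0" using c d \<epsilon> by simp
  moreover have "(\<Sum>i. emeasure M {\<omega> \<in> space M. klplus (emp_mean X (i + K + 1) \<omega>) m < ereal (d / (1 + \<epsilon>))})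
      \<le> ennreal (C2 / real n powr (c * ((1 + \<epsilon>) / d)))"
    if n: "n \<ge> 3" and K: "K = nat \<lfloor>(1 + \<epsilon>) / d * (ln (real n) + 3 * ln (ln (real n)))\<rfloor>" for n K
  proof -
    have terms: "emeasure M {\<omega> \<in> space M. klplus (emp_mean X (i + K + 1) \<omega>) m < ereal (d / (1 + \<epsilon>))}
        \<le> ennreal (2 * exp (- c * real (i + (K + 1))))" for i
      using decay[of "i + K + 1"] by (simp add: add.assoc)
    have "(\<Sum>i. emeasure M {\<omega> \<in> space M. klplus (emp_mean X (i + K + 1) \<omega>) m < ereal (d / (1 + \<epsilon>))})
        \<le> ennreal (C2 * exp (- c * real (K + 1)))"
      using suminf_tail_exp_bound[OF c _ terms] by (simp add: C2_def)
    also have "\<dots> \<le> ennreal (C2 * (1 / real n powr (c * ((1 + \<epsilon>) / d))))"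
      using exp_threshold_bound[OF n _ c, of "(1 + \<epsilon>) / d"] d \<epsilon> \<open>C2 > 0\<close> K
      by (intro ennreal_leI mult_left_mono) auto
    finally show ?thesis by simp
  qed
  ultimately show ?thesis unfolding level d_def[symmetric] by blast
qed

theorem lemma3:
  fixes M :: "'a measure" and X :: "nat \<Rightarrow> 'a \<Rightarrow> real" and \<mu>a \<mu>1 :: real
  assumes "prob_space M"
    and "\<And>s. s \<ge> 1 \<Longrightarrow> X s \<in> borel_measurable M"
    and "prob_space.indep_vars M (\<lambda>_. borel) X {1..}"
    and "\<And>s. s \<ge> 1 \<Longrightarrow> distr M borel (X s) = distr M borel (X 1)"
    and "\<And>s \<omega>. s \<ge> 1 \<Longrightarrow> \<omega> \<in> space M \<Longrightarrow> X s \<omega> \<in> {0..1}"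
    and "prob_space.expectation M (X 1) = \<mu>a"
    and "\<mu>a < \<mu>1" and "\<mu>1 < 1"
  shows "\<forall>\<epsilon>>0. \<exists>C2>0. \<exists>\<beta>>0. \<forall>n::nat. n \<ge> 3 \<longrightarrow>
    (let K = nat \<lfloor>(1 + \<epsilon>) / real_of_ereal (kl \<mu>a \<mu>1) * (ln (real n) + 3 * ln (ln (real n)))\<rfloor>
     in (\<Sum>i. emeasure M {\<omega> \<in> space M.
            klplus (emp_mean X (i + K + 1) \<omega>) \<mu>1 < kl \<mu>a \<mu>1 / ereal (1 + \<epsilon>)})
        \<le> ennreal (C2 / real n powr \<beta>))"
proof -
  interpret prob_space M by fact
  have "0 \<le> \<mu>a" using assms(5,6) unit_interval_mean_nonneg by fastforce
  then have "kl \<mu>a \<mu>1 = ereal (kl_real \<mu>1 \<mu>a)"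
    using assms(7,8) by (intro kl_eq_kl_real) auto
  then show ?thesis
    using tail_sum_bound[OF assms(2-8)] by (simp add: Let_def)
qed

end
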